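(* The twelve 2-tangles $[\infty],[0],[-1],[1],[-2],[2],[\frac25],[\frac52],[\frac32],[-\frac32],[\frac12],[-\frac12]$ lie in pairwise different $5$-move equivalence classes.
   Context: 2-tangles are considered in a ball with four boundary points, up to isotopy fixing the boundary; $[\frac pq]$ is Conway's rational tangle with fraction $p/q$ ($[0]$ two horizontal arcs, $[\infty]$ two vertical arcs, $[n]$ $|n|$ horizontal half-twists, $[\frac1n]$ $|n|$ vertical half-twists). A $5$-move replaces a sub-tangle $[0]$ (inside a ball meeting the tangle in two arcs) by the tangle $[5]$ of five half-twists; $5$-move equivalence is generated by isotopy rel boundary and $5$-moves and their inverses. *)

theory Defs
  imports Main
begin

text \<open>Unoriented tangle diagrams as morphisms of the (strict monoidal) tangle category,
  generated by cups, caps and the two crossings.  A morphism m -> n has m bottom endpoints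
  and n top endpoints (left to right); diagrams are read bottom to top.
  Cmp S T means: first S, then T on top of it.  Ten S T places S to the left of T.
  Pos: the strand from bottom-left to top-right passes OVER.
  Neg: the strand from bottom-left to top-right passes UNDER.\<close>

datatype tg = Id nat | Cup | Cap | Pos | Neg | Cmp tg tg | Ten tg tg

fun dom :: "tg \<Rightarrow> nat" and cod :: "tg \<Rightarrow> nat" where
  "dom (Id n) = n" | "cod (Id n) = n"
| "dom Cup = 0" | "cod Cup = 2"
| "dom Cap = 2" | "cod Cap = 0"
| "dom Pos = 2" | "cod Pos = 2"
| "dom Neg = 2" | "cod Neg = 2"
| "dom (Cmp S T) = dom S" | "cod (Cmp S T) = cod T"
| "dom (Ten S T) = dom S + dom T" | "cod (Ten S T) = cod S + cod T"

fun wt :: "tg \<Rightarrow> bool" where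
  "wt (Cmp S T) = (wt S \<and> wt T \<and> cod S = dom T)"
| "wt (Ten S T) = (wt S \<and> wt T)"
| "wt _ = True"

text \<open>Equivalence of tangle diagrams generated by isotopy (Turaev's presentation of the
  unoriented, unframed tangle category) together with an extra set R of local moves
  (pairs of well-typed diagrams with equal source and target), closed under composition,
  tensor, symmetry and transitivity.  Isotopy rel boundary is tg_rel {}.\<close>

inductive tg_rel :: "(tg \<times> tg) set \<Rightarrow> tg \<Rightarrow> tg \<Rightarrow> bool" for R where
  refl: "wt T \<Longrightarrow> tg_rel R T T"
| sym: "tg_rel R S T \<Longrightarrow> tg_rel R T S"
| trans: "tg_rel R S T \<Longrightarrow> tg_rel R T U \<Longrightarrow> tg_rel R S U"
| cong_cmp: "tg_rel R S S' \<Longrightarrow> tg_rel R T T' \<Longrightarrow> cod S = dom T \<Longrightarrow>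
     tg_rel R (Cmp S T) (Cmp S' T')"
| cong_ten: "tg_rel R S S' \<Longrightarrow> tg_rel R T T' \<Longrightarrow> tg_rel R (Ten S T) (Ten S' T')"
| move: "(S, T) \<in> R \<Longrightarrow> wt S \<Longrightarrow> wt T \<Longrightarrow> dom S = dom T \<Longrightarrow> cod S = cod T \<Longrightarrow>
     tg_rel R S T"
| id_left: "wt T \<Longrightarrow> tg_rel R (Cmp (Id (dom T)) T) T"
| id_right: "wt T \<Longrightarrow> tg_rel R (Cmp T (Id (cod T))) T"
| cmp_assoc: "wt S \<Longrightarrow> wt T \<Longrightarrow> wt U \<Longrightarrow> cod S = dom T \<Longrightarrow> cod T = dom U \<Longrightarrow>
     tg_rel R (Cmp (Cmp S T) U) (Cmp S (Cmp T U))"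
| ten_unit_left: "wt T \<Longrightarrow> tg_rel R (Ten (Id 0) T) T"
| ten_unit_right: "wt T \<Longrightarrow> tg_rel R (Ten T (Id 0)) T"
| ten_assoc: "wt S \<Longrightarrow> wt T \<Longrightarrow> wt U \<Longrightarrow> tg_rel R (Ten (Ten S T) U) (Ten S (Ten T U))"
| ten_id: "tg_rel R (Ten (Id m) (Id n)) (Id (m + n))"
| interchange: "wt A \<Longrightarrow> wt B \<Longrightarrow> wt C \<Longrightarrow> wt D \<Longrightarrow> cod A = dom B \<Longrightarrow> cod C = dom D \<Longrightarrow>
     tg_rel R (Ten (Cmp A B) (Cmp C D)) (Cmp (Ten A C) (Ten B D))"
| snake1: "tg_rel R (Cmp (Ten (Id 1) Cup) (Ten Cap (Id 1))) (Id 1)"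
| snake2: "tg_rel R (Cmp (Ten Cup (Id 1)) (Ten (Id 1) Cap)) (Id 1)"
  (* Reidemeister I (unframed) *)
| r1_cup_pos: "tg_rel R (Cmp Cup Pos) Cup"
| r1_cup_neg: "tg_rel R (Cmp Cup Neg) Cup"
| r1_cap_pos: "tg_rel R (Cmp Pos Cap) Cap"
| r1_cap_neg: "tg_rel R (Cmp Neg Cap) Cap"
| r2a: "tg_rel R (Cmp Pos Neg) (Id 2)"
| r2b: "tg_rel R (Cmp Neg Pos) (Id 2)"
| r3_pos: "tg_rel R (Cmp (Cmp (Ten Pos (Id 1)) (Ten (Id 1) Pos)) (Ten Pos (Id 1)))
                    (Cmp (Cmp (Ten (Id 1) Pos) (Ten Pos (Id 1))) (Ten (Id 1) Pos))"
| r3_neg: "tg_rel R (Cmp (Cmp (Ten Neg (Id 1)) (Ten (Id 1) Neg)) (Ten Neg (Id 1)))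
                    (Cmp (Cmp (Ten (Id 1) Neg) (Ten Neg (Id 1))) (Ten (Id 1) Neg))"
| slide_cup_pos: "tg_rel R (Cmp (Ten Cup (Id 1)) (Ten (Id 1) Pos)) (Cmp (Ten (Id 1) Cup) (Ten Neg (Id 1)))"
| slide_cup_neg: "tg_rel R (Cmp (Ten Cup (Id 1)) (Ten (Id 1) Neg)) (Cmp (Ten (Id 1) Cup) (Ten Pos (Id 1)))"
| slide_cap_pos: "tg_rel R (Cmp (Ten (Id 1) Pos) (Ten Cap (Id 1))) (Cmp (Ten Neg (Id 1)) (Ten (Id 1) Cap))"
| slide_cap_neg: "tg_rel R (Cmp (Ten (Id 1) Neg) (Ten Cap (Id 1))) (Cmp (Ten Pos (Id 1)) (Ten (Id 1) Cap))"
| rot_pos: "tg_rel R (Cmp (Cmp (Ten Cup (Id 2)) (Ten (Id 1) (Ten Pos (Id 1)))) (Ten (Id 2) Cap)) Neg"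
| rot_neg: "tg_rel R (Cmp (Cmp (Ten Cup (Id 2)) (Ten (Id 1) (Ten Neg (Id 1)))) (Ten (Id 2) Cap)) Pos"

text \<open>2-tangles: 2 bottom endpoints (SW, SE) and 2 top endpoints (NW, NE).
  Conway sum (S to the left of T, S's east endpoints joined to T's west endpoints)
  and Conway product (S below T, S's north endpoints joined to T's south endpoints).\<close>

definition tsum :: "tg \<Rightarrow> tg \<Rightarrow> tg" where
  "tsum S T = Cmp (Cmp (Ten (Id 1) (Ten Cup (Id 1))) (Ten S T)) (Ten (Id 1) (Ten Cap (Id 1)))"

definition tprod :: "tg \<Rightarrow> tg \<Rightarrow> tg" where
  "tprod S T = Cmp S T"

text \<open>Conway's rational tangles needed (the crossing Pos plays the role of [1]).\<close>
definition "rt_inf = Id 2"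
definition "rt_0 = Cmp Cap Cup"
definition "rt_1 = Pos"
definition "rt_m1 = Neg"
definition "rt_2 = tsum Pos Pos"
definition "rt_m2 = tsum Neg Neg"
definition "rt_1_2 = tprod Pos Pos"
definition "rt_m1_2 = tprod Neg Neg"
definition "rt_3_2 = tsum rt_1_2 Pos"           (* 1/2 + 1 = 3/2 *)
definition "rt_m3_2 = tsum rt_m1_2 Neg"
definition "rt_5_2 = tsum rt_1_2 rt_2"          (* 1/2 + 2 = 5/2 *)
definition "rt_2_5 = tprod (tprod rt_2 Pos) Pos" (* 1/(1/2+1+1) = 2/5 *)
definition "rt_5 = tsum Pos (tsum Pos (tsum Pos (tsum Pos Pos)))"

definition five_equiv :: "tg \<Rightarrow> tg \<Rightarrow> bool" where
  "five_equiv = tg_rel {(rt_0, rt_5)}"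

end

theory Submission
  imports Defs "HOL-Number_Theory.Cong"
begin

text \<open>The invariant is the Kauffman bracket at \<open>A = 6\<close> over \<open>\<int>/41\<close>, computed as a state sum
  over bit labellings of the endpoints.  Isotopy only multiplies it by a unit (the framing factors
  \<open>-A\<^sup>\<plusminus>\<^sup>3\<close>), and on a 2-tangle it has the form \<open>\<alpha>[\<infinity>] + \<beta>[0]\<close>.  The \<open>[\<infinity>]\<close>-coefficient
  of the bracket of \<open>[n]\<close> is proportional to \<open>(-A\<^sup>4)\<^sup>n - 1\<close>, which vanishes for \<open>n = 5\<close> because
  \<open>A\<^sup>2\<^sup>0 \<equiv> -1\<close>; so a 5-move rescales the bracket as well, and the point \<open>(\<alpha> : \<beta>)\<close> of the projective
  line over \<open>\<int>/41\<close> is a 5-move invariant.\<close>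

fun bitstrings :: "nat \<Rightarrow> bool list list" where
  "bitstrings 0 = [[]]"
| "bitstrings (Suc n) = map (Cons False) (bitstrings n) @ map (Cons True) (bitstrings n)"

lemma set_bitstrings: "set (bitstrings n) = {xs. length xs = n}"
proof (induction n)
  case (Suc n)
  have "xs \<in> set (bitstrings (Suc n))" if "length xs = Suc n" for xs
    using that Suc by (cases xs) (auto intro: image_eqI)
  then show ?case using Suc by auto
qed simp

lemma distinct_bitstrings: "distinct (bitstrings n)"
  by (induction n) (auto simp: distinct_map)

lemma finite_length_eq: "finite {xs :: bool list. length xs = n}"
  by (metis set_bitstrings List.finite_set)

lemma bitstrings_small:
  "bitstrings 1 = [[False], [True]]"
  "bitstrings 2 = [[False, False], [False, True], [True, False], [True, True]]"
  "bitstrings 3 = [[False, False, False], [False, False, True], [False, True, False], [False, True, True],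
     [True, False, False], [True, False, True], [True, True, False], [True, True, True]]"
  "bitstrings 4 = map (Cons False) (bitstrings 3) @ map (Cons True) (bitstrings 3)"
  by (simp_all add: numeral_eq_Suc)

lemma sum_length_append:
  "(\<Sum>w | length w = k + l. g w) = (\<Sum>y | length y = k. \<Sum>y' | length y' = l. g (y @ y' :: bool list))"
proof -
  have "bij_betw (\<lambda>p. fst p @ snd p) ({y. length y = k} \<times> {y'. length y' = l}) {w. length w = k + l}"
    by (rule bij_betw_byWitness[where f' = "\<lambda>w. (take k w, drop k w)"]) auto
  then have "(\<Sum>p \<in> {y. length y = k} \<times> {y'. length y' = l}. g (fst p @ snd p)) = (\<Sum>w | length w = k + l. g w)"
    by (rule sum.reindex_bij_betw)
  then show ?thesis
    by (simp add: sum.cartesian_product split_def)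
qed

text \<open>A crossing is \<open>A = 6\<close> times the identity plus \<open>A\<inverse> = 7\<close> times cap-then-cup.  The cup
  vector satisfies \<open>13 * -22 \<equiv> 1\<close> (the zigzag identities) and \<open>13\<^sup>2 + 22\<^sup>2 = 653 \<equiv> -A\<^sup>2 - A\<^sup>-\<^sup>2\<close>
  (the value of a loop) modulo 41.\<close>

definition cupcap :: "bool list \<Rightarrow> int" where
  "cupcap x = (if x = [False, True] then 13 else if x = [True, False] then -22 else 0)"

fun bracket :: "tg \<Rightarrow> bool list \<Rightarrow> bool list \<Rightarrow> int" where
  "bracket (Id n) x z = of_bool (x = z)"
| "bracket Cup x z = cupcap z"
| "bracket Cap x z = cupcap x"
| "bracket Pos x z = 6 * of_bool (x = z) + 7 * cupcap x * cupcap z"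
| "bracket Neg x z = 7 * of_bool (x = z) + 6 * cupcap x * cupcap z"
| "bracket (Cmp S T) x z = (\<Sum>y\<leftarrow>bitstrings (cod S). bracket S x y * bracket T y z)"
| "bracket (Ten S T) x z =
     bracket S (take (dom S) x) (take (cod S) z) * bracket T (drop (dom S) x) (drop (cod S) z)"

lemma bracket_Cmp:
  "bracket (Cmp S T) x z = (\<Sum>y | length y = cod S. bracket S x y * bracket T y z)"
  by (simp add: sum_list_distinct_conv_sum_set distinct_bitstrings set_bitstrings)

text \<open>For evaluating brackets of concrete diagrams, the congruence rule keeps the simplifier
  out of the summand until the list of states is explicit.\<close>

definition sum_over :: "'a list \<Rightarrow> ('a \<Rightarrow> int) \<Rightarrow> int" where
  "sum_over xs f = (\<Sum>x\<leftarrow>xs. f x)"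

lemma sum_over_simps [simp]:
  "sum_over [] f = 0"
  "sum_over (x # xs) f = f x + sum_over xs f"
  by (simp_all add: sum_over_def)

lemma sum_over_cong [cong]: "xs = ys \<Longrightarrow> sum_over xs f = sum_over ys f"
  by simp

lemma bracket_Cmp_eval:
  "bracket (Cmp S T) x z = sum_over (bitstrings (cod S)) (\<lambda>y. bracket S x y * bracket T y z)"
  by (simp add: sum_over_def)

declare bracket.simps(6) [simp del]

lemmas bracket_eval = bracket_Cmp_eval bitstrings_small cupcap_def

lemma bracket_Cmp_Id_left: "length x = n \<Longrightarrow> bracket (Cmp (Id n) T) x z = bracket T x z"
  by (simp add: bracket_Cmp finite_length_eq sum.delta)

lemma bracket_Cmp_Id_right: "length z = cod T \<Longrightarrow> bracket (Cmp T (Id (cod T))) x z = bracket T x z"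
  by (simp add: bracket_Cmp finite_length_eq)

lemma bracket_Cmp_assoc: "bracket (Cmp (Cmp S T) U) x z = bracket (Cmp S (Cmp T U)) x z"
  by (simp add: bracket_Cmp sum_distrib_left sum_distrib_right mult.assoc
      sum.swap[of _ "{xs. length xs = cod S}"])

lemma bracket_Ten_assoc: "bracket (Ten (Ten S T) U) x z = bracket (Ten S (Ten T U)) x z"
  by (simp add: take_take drop_take drop_drop ac_simps)

lemma bracket_Ten_Id: "bracket (Ten (Id m) (Id n)) x z = bracket (Id (m + n)) x z"
proof -
  have "(x = z) \<longleftrightarrow> (take m x = take m z \<and> drop m x = drop m z)"
    by (metis append_take_drop_id)
  then show ?thesis by simp
qed

lemma bracket_interchange:
  assumes "cod A = dom B" "cod C = dom D"
  shows "bracket (Ten (Cmp A B) (Cmp C D)) x z = bracket (Cmp (Ten A C) (Ten B D)) x z"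
  using assms by (simp add: bracket_Cmp sum_length_append sum_product mult_ac)

definition proj_cong ::
    "int \<Rightarrow> nat \<Rightarrow> nat \<Rightarrow> (bool list \<Rightarrow> bool list \<Rightarrow> int) \<Rightarrow> (bool list \<Rightarrow> bool list \<Rightarrow> int) \<Rightarrow> bool"
  where "proj_cong p m n M N \<longleftrightarrow> (\<exists>u v. [u * v = 1] (mod p) \<and>
      (\<forall>x z. length x = m \<longrightarrow> length z = n \<longrightarrow> [M x z = u * N x z] (mod p)))"

lemma proj_congI_eq:
  "(\<And>x z. length x = m \<Longrightarrow> length z = n \<Longrightarrow> M x z = N x z) \<Longrightarrow> proj_cong p m n M N"
  unfolding proj_cong_def by (intro exI[of _ 1]) auto

lemma proj_congI_table:
  assumes "[u * v = 1] (mod p)"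
    and "\<forall>x\<in>set (bitstrings m). \<forall>z\<in>set (bitstrings n). [M x z = u * N x z] (mod p)"
  shows "proj_cong p m n M N"
  using assms unfolding proj_cong_def set_bitstrings by blast

lemma proj_cong_refl: "proj_cong p m n M M"
  by (rule proj_congI_eq) simp

lemma cong_unit_mult:
  "[u * v = 1] (mod p) \<Longrightarrow> [u' * v' = 1] (mod p) \<Longrightarrow> [(u * u') * (v * v') = 1] (mod p)"
  by (metis cong_mult mult.left_neutral mult.assoc mult.left_commute)

lemma proj_cong_sym:
  assumes "proj_cong p m n M N"
  shows "proj_cong p m n N M"
proof -
  obtain u v where uv: "[u * v = 1] (mod p)"
    and MN: "\<And>x z. length x = m \<Longrightarrow> length z = n \<Longrightarrow> [M x z = u * N x z] (mod p)"
    using assms unfolding proj_cong_def by blast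
  have "[N x z = v * M x z] (mod p)" if "length x = m" "length z = n" for x z
  proof -
    have "[v * M x z = v * (u * N x z)] (mod p)"
      using MN[OF that] by (rule cong_scalar_left)
    also have "v * (u * N x z) = (u * v) * N x z"
      by simp
    also have "[\<dots> = 1 * N x z] (mod p)"
      using uv by (rule cong_scalar_right)
    finally show ?thesis
      by (simp add: cong_sym_eq)
  qed
  moreover have "[v * u = 1] (mod p)"
    using uv by (simp add: mult.commute)
  ultimately show ?thesis
    unfolding proj_cong_def by blast
qed

lemma proj_cong_trans:
  assumes "proj_cong p m n M N" "proj_cong p m n N P"
  shows "proj_cong p m n M P"
proof -
  obtain u v where uv: "[u * v = 1] (mod p)"
    and MN: "\<And>x z. length x = m \<Longrightarrow> length z = n \<Longrightarrow> [M x z = u * N x z] (mod p)"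
    using assms(1) unfolding proj_cong_def by blast
  obtain u' v' where uv': "[u' * v' = 1] (mod p)"
    and NP: "\<And>x z. length x = m \<Longrightarrow> length z = n \<Longrightarrow> [N x z = u' * P x z] (mod p)"
    using assms(2) unfolding proj_cong_def by blast
  have "[M x z = (u * u') * P x z] (mod p)" if "length x = m" "length z = n" for x z
    using cong_trans[OF MN[OF that] cong_scalar_left[OF NP[OF that]]] by (simp add: mult.assoc)
  with cong_unit_mult[OF uv uv'] show ?thesis
    unfolding proj_cong_def by blast
qed

lemma proj_cong_compose:
  assumes "proj_cong p l m M M'" "proj_cong p m n N N'"
  shows "proj_cong p l n (\<lambda>x z. \<Sum>y | length y = m. M x y * N y z)
                         (\<lambda>x z. \<Sum>y | length y = m. M' x y * N' y z)"
proof -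
  obtain u v where uv: "[u * v = 1] (mod p)"
    and M: "\<And>x z. length x = l \<Longrightarrow> length z = m \<Longrightarrow> [M x z = u * M' x z] (mod p)"
    using assms(1) unfolding proj_cong_def by blast
  obtain u' v' where uv': "[u' * v' = 1] (mod p)"
    and N: "\<And>x z. length x = m \<Longrightarrow> length z = n \<Longrightarrow> [N x z = u' * N' x z] (mod p)"
    using assms(2) unfolding proj_cong_def by blast
  have "[(\<Sum>y | length y = m. M x y * N y z) = (u * u') * (\<Sum>y | length y = m. M' x y * N' y z)] (mod p)"
    if "length x = l" "length z = n" for x z
  proof -
    have "[(\<Sum>y | length y = m. M x y * N y z) = (\<Sum>y | length y = m. (u * M' x y) * (u' * N' y z))] (mod p)"
      by (rule cong_sum, rule cong_mult) (use M N that in auto)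
    then show ?thesis
      by (simp add: sum_distrib_left ac_simps)
  qed
  with cong_unit_mult[OF uv uv'] show ?thesis
    unfolding proj_cong_def by blast
qed

lemma proj_cong_tensor:
  assumes "proj_cong p a b M M'" "proj_cong p c d N N'"
  shows "proj_cong p (a + c) (b + d) (\<lambda>x z. M (take a x) (take b z) * N (drop a x) (drop b z))
                                     (\<lambda>x z. M' (take a x) (take b z) * N' (drop a x) (drop b z))"
proof -
  obtain u v where uv: "[u * v = 1] (mod p)"
    and M: "\<And>x z. length x = a \<Longrightarrow> length z = b \<Longrightarrow> [M x z = u * M' x z] (mod p)"
    using assms(1) unfolding proj_cong_def by blast
  obtain u' v' where uv': "[u' * v' = 1] (mod p)"
    and N: "\<And>x z. length x = c \<Longrightarrow> length z = d \<Longrightarrow> [N x z = u' * N' x z] (mod p)"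
    using assms(2) unfolding proj_cong_def by blast
  have "[M (take a x) (take b z) * N (drop a x) (drop b z)
        = (u * u') * (M' (take a x) (take b z) * N' (drop a x) (drop b z))] (mod p)"
    if "length x = a + c" "length z = b + d" for x z
    using cong_mult[OF M N] that by (simp add: ac_simps)
  with cong_unit_mult[OF uv uv'] show ?thesis
    unfolding proj_cong_def by blast
qed

lemma bracket_zigzag:
  "proj_cong 41 1 1 (bracket (Cmp (Ten (Id 1) Cup) (Ten Cap (Id 1)))) (bracket (Id 1))"
  "proj_cong 41 1 1 (bracket (Cmp (Ten Cup (Id 1)) (Ten (Id 1) Cap))) (bracket (Id 1))"
  by (rule proj_congI_table[of 1 1]; simp only: bitstrings_small list.set ball_simps cong_def;
      simp add: bracket_eval)+

text \<open>A kink contributes the framing factor \<open>-A\<^sup>-\<^sup>3 \<equiv> 26\<close> or \<open>-A\<^sup>3 \<equiv> 30\<close>.\<close>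

lemma bracket_reidemeister_I:
  "proj_cong 41 0 2 (bracket (Cmp Cup Pos)) (bracket Cup)"
  "proj_cong 41 0 2 (bracket (Cmp Cup Neg)) (bracket Cup)"
  "proj_cong 41 2 0 (bracket (Cmp Pos Cap)) (bracket Cap)"
  "proj_cong 41 2 0 (bracket (Cmp Neg Cap)) (bracket Cap)"
  by (rule proj_congI_table[of 26 30] proj_congI_table[of 30 26];
      simp only: bitstrings_small list.set ball_simps cong_def; simp add: bracket_eval)+

lemma bracket_reidemeister_II:
  "proj_cong 41 2 2 (bracket (Cmp Pos Neg)) (bracket (Id 2))"
  "proj_cong 41 2 2 (bracket (Cmp Neg Pos)) (bracket (Id 2))"
  by (rule proj_congI_table[of 1 1]; simp only: bitstrings_small list.set ball_simps cong_def;
      simp add: bracket_eval)+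

lemma bracket_reidemeister_III:
  "proj_cong 41 3 3 (bracket (Cmp (Cmp (Ten Pos (Id 1)) (Ten (Id 1) Pos)) (Ten Pos (Id 1))))
                    (bracket (Cmp (Cmp (Ten (Id 1) Pos) (Ten Pos (Id 1))) (Ten (Id 1) Pos)))"
  "proj_cong 41 3 3 (bracket (Cmp (Cmp (Ten Neg (Id 1)) (Ten (Id 1) Neg)) (Ten Neg (Id 1))))
                    (bracket (Cmp (Cmp (Ten (Id 1) Neg) (Ten Neg (Id 1))) (Ten (Id 1) Neg)))"
  by (rule proj_congI_table[of 1 1]; simp only: bitstrings_small list.set ball_simps cong_def;
      simp add: bracket_eval)+

lemma bracket_slide:
  "proj_cong 41 1 3 (bracket (Cmp (Ten Cup (Id 1)) (Ten (Id 1) Pos))) (bracket (Cmp (Ten (Id 1) Cup) (Ten Neg (Id 1))))"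
  "proj_cong 41 1 3 (bracket (Cmp (Ten Cup (Id 1)) (Ten (Id 1) Neg))) (bracket (Cmp (Ten (Id 1) Cup) (Ten Pos (Id 1))))"
  "proj_cong 41 3 1 (bracket (Cmp (Ten (Id 1) Pos) (Ten Cap (Id 1)))) (bracket (Cmp (Ten Neg (Id 1)) (Ten (Id 1) Cap)))"
  "proj_cong 41 3 1 (bracket (Cmp (Ten (Id 1) Neg) (Ten Cap (Id 1)))) (bracket (Cmp (Ten Pos (Id 1)) (Ten (Id 1) Cap)))"
  by (rule proj_congI_table[of 1 1]; simp only: bitstrings_small list.set ball_simps cong_def;
      simp add: bracket_eval)+

lemma bracket_rotate:
  "proj_cong 41 2 2 (bracket (Cmp (Cmp (Ten Cup (Id 2)) (Ten (Id 1) (Ten Pos (Id 1)))) (Ten (Id 2) Cap))) (bracket Neg)"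
  "proj_cong 41 2 2 (bracket (Cmp (Cmp (Ten Cup (Id 2)) (Ten (Id 1) (Ten Neg (Id 1)))) (Ten (Id 2) Cap))) (bracket Pos)"
  by (rule proj_congI_table[of 1 1]; simp only: bitstrings_small list.set ball_simps cong_def;
      simp add: bracket_eval)+

lemmas bracket_local_moves =
  bracket_zigzag bracket_reidemeister_I bracket_reidemeister_II bracket_reidemeister_III
  bracket_slide bracket_rotate

lemma tg_rel_typed: "tg_rel R S T \<Longrightarrow> wt S \<and> wt T \<and> dom S = dom T \<and> cod S = cod T"
  by (induction rule: tg_rel.induct) auto

lemma proj_cong_dims: "proj_cong p m n M N \<Longrightarrow> m = m' \<Longrightarrow> n = n' \<Longrightarrow> proj_cong p m' n' M N"
  by simp

theorem proj_cong_bracket_tg_rel: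
  assumes "tg_rel R S T"
    and "\<And>S T. (S, T) \<in> R \<Longrightarrow> proj_cong 41 (dom S) (cod S) (bracket S) (bracket T)"
  shows "proj_cong 41 (dom S) (cod S) (bracket S) (bracket T)"
  using assms(1)
proof (induction rule: tg_rel.induct)
  case (refl T)
  show ?case by (rule proj_cong_refl)
next
  case (sym S T)
  then show ?case using tg_rel_typed proj_cong_sym by metis
next
  case (trans S T U)
  then show ?case using tg_rel_typed proj_cong_trans by metis
next
  case (cong_cmp S S' T T')
  have "cod S' = cod S"
    using cong_cmp.hyps(1) tg_rel_typed by metis
  moreover have "proj_cong 41 (cod S) (cod T) (bracket T) (bracket T')"
    using cong_cmp.IH(2) cong_cmp.hyps(3) by simp
  ultimately show ?case
    using proj_cong_compose[OF cong_cmp.IH(1)] by (simp add: bracket_Cmp[abs_def])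
next
  case (cong_ten S S' T T')
  then have "dom S' = dom S" "cod S' = cod S" using tg_rel_typed by metis+
  with proj_cong_tensor[OF cong_ten.IH] show ?case
    by (simp add: bracket.simps(7)[abs_def])
next
  case (move S T)
  then show ?case using assms(2) by blast
next
  case (id_left T)
  show ?case by (rule proj_congI_eq) (simp add: bracket_Cmp_Id_left)
next
  case (id_right T)
  show ?case by (rule proj_congI_eq) (simp add: bracket_Cmp_Id_right)
next
  case (cmp_assoc S T U)
  show ?case by (rule proj_congI_eq) (simp add: bracket_Cmp_assoc)
next
  case (ten_assoc S T U)
  show ?case by (rule proj_congI_eq) (simp only: bracket_Ten_assoc)
next
  case (ten_id m n)
  show ?case by (rule proj_congI_eq) (simp only: bracket_Ten_Id dom.simps cod.simps)
next
  case (interchange A B C D)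
  then show ?case by (intro proj_congI_eq) (simp only: bracket_interchange)
next
  case (ten_unit_left T)
  show ?case by (rule proj_congI_eq) simp
next
  case (ten_unit_right T)
  show ?case by (rule proj_congI_eq) simp
qed (rule proj_cong_dims, rule bracket_local_moves, simp, simp)+

definition bracket_coeffs :: "tg \<Rightarrow> int \<times> int \<Rightarrow> bool" where
  "bracket_coeffs T c \<longleftrightarrow> dom T = 2 \<and> cod T = 2 \<and>
     (\<forall>a b a' b'. bracket T [a, b] [a', b'] =
        fst c * of_bool ([a, b] = [a', b']) + snd c * cupcap [a, b] * cupcap [a', b'])"

text \<open>\<open>653\<close> is the value of a loop, and \<open>81796 = 286\<^sup>2\<close> comes from the two zigzags in a sum.\<close>

fun sum_coeffs :: "int \<times> int \<Rightarrow> int \<times> int \<Rightarrow> int \<times> int" where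
  "sum_coeffs (a, b) (c, d) = (653 * a * c + 81796 * (a * d + b * c), 81796 * b * d)"

fun prod_coeffs :: "int \<times> int \<Rightarrow> int \<times> int \<Rightarrow> int \<times> int" where
  "prod_coeffs (a, b) (c, d) = (a * c, a * d + b * c + 653 * b * d)"

lemma bracket_coeffs_generators:
  "bracket_coeffs (Id 2) (1, 0)"
  "bracket_coeffs (Cmp Cap Cup) (0, 1)"
  "bracket_coeffs Pos (6, 7)"
  "bracket_coeffs Neg (7, 6)"
  by (simp_all add: bracket_coeffs_def bracket_eval)

lemma bracket_tsum:
  assumes "dom S = 2" "cod S = 2" "dom T = 2" "cod T = 2"
  shows "bracket (tsum S T) [a, b] [c, d] =
       169 * bracket S [a, False] [c, False] * bracket T [True, b] [True, d]
     - 286 * bracket S [a, False] [c, True] * bracket T [True, b] [False, d]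
     - 286 * bracket S [a, True] [c, False] * bracket T [False, b] [True, d]
     + 484 * bracket S [a, True] [c, True] * bracket T [False, b] [False, d]"
  using assms by (cases a; cases b; cases c; cases d) (simp_all add: tsum_def bracket_eval algebra_simps)

lemma bracket_coeffs_tsum:
  assumes "bracket_coeffs S p" "bracket_coeffs T q"
  shows "bracket_coeffs (tsum S T) (sum_coeffs p q)"
proof -
  obtain a b c d where pq: "p = (a, b)" "q = (c, d)"
    by fastforce
  have dims: "dom (tsum S T) = 2" "cod (tsum S T) = 2"
    by (simp_all add: tsum_def)
  show ?thesis
    using assms unfolding bracket_coeffs_def
    apply (intro conjI allI dims)
    subgoal for x y x' y'
      by (cases x; cases y; cases x'; cases y') (simp_all add: bracket_tsum pq cupcap_def algebra_simps)
    done
qed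

lemma bracket_coeffs_tprod:
  assumes "bracket_coeffs S p" "bracket_coeffs T q"
  shows "bracket_coeffs (tprod S T) (prod_coeffs p q)"
proof -
  obtain a b c d where pq: "p = (a, b)" "q = (c, d)"
    by fastforce
  show ?thesis
    using assms unfolding bracket_coeffs_def
    by (auto simp: tprod_def bracket_eval pq algebra_simps split: bool.splits)
qed

lemma bracket_coeffs_rational:
  "bracket_coeffs rt_inf (1, 0)"
  "bracket_coeffs rt_0 (0, 1)"
  "bracket_coeffs rt_1 (6, 7)"
  "bracket_coeffs rt_m1 (7, 6)"
  "bracket_coeffs rt_2 (sum_coeffs (6, 7) (6, 7))"
  "bracket_coeffs rt_m2 (sum_coeffs (7, 6) (7, 6))"
  "bracket_coeffs rt_1_2 (prod_coeffs (6, 7) (6, 7))"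
  "bracket_coeffs rt_m1_2 (prod_coeffs (7, 6) (7, 6))"
  "bracket_coeffs rt_3_2 (sum_coeffs (prod_coeffs (6, 7) (6, 7)) (6, 7))"
  "bracket_coeffs rt_m3_2 (sum_coeffs (prod_coeffs (7, 6) (7, 6)) (7, 6))"
  "bracket_coeffs rt_5_2 (sum_coeffs (prod_coeffs (6, 7) (6, 7)) (sum_coeffs (6, 7) (6, 7)))"
  "bracket_coeffs rt_2_5 (prod_coeffs (prod_coeffs (sum_coeffs (6, 7) (6, 7)) (6, 7)) (6, 7))"
  "bracket_coeffs rt_5 (sum_coeffs (6, 7) (sum_coeffs (6, 7) (sum_coeffs (6, 7) (sum_coeffs (6, 7) (6, 7)))))"
  unfolding rt_inf_def rt_0_def rt_1_def rt_m1_def rt_2_def rt_m2_def rt_1_2_def rt_m1_2_def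
    rt_3_2_def rt_m3_2_def rt_5_2_def rt_2_5_def rt_5_def
  by (intro bracket_coeffs_tsum bracket_coeffs_tprod bracket_coeffs_generators)+

lemma proj_cong_of_coeffs:
  assumes "bracket_coeffs S p" "bracket_coeffs T q" "[u * v = 1] (mod m)"
    and "[fst p = u * fst q] (mod m)" "[snd p = u * snd q] (mod m)"
  shows "proj_cong m 2 2 (bracket S) (bracket T)"
  unfolding proj_cong_def
proof (intro exI conjI allI impI)
  fix x z :: "bool list"
  assume "length x = 2" "length z = 2"
  then obtain a b a' b' where xz: "x = [a, b]" "z = [a', b']"
    by (auto simp: numeral_2_eq_2 length_Suc_conv)
  have "[fst p * of_bool (x = z) + snd p * (cupcap x * cupcap z)
      = (u * fst q) * of_bool (x = z) + (u * snd q) * (cupcap x * cupcap z)] (mod m)"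
    using assms(4,5) by (intro cong_add cong_scalar_right)
  then show "[bracket S x z = u * bracket T x z] (mod m)"
    using assms(1,2) xz by (simp add: bracket_coeffs_def algebra_simps)
qed (fact assms(3))

lemma bracket_five_move: "proj_cong 41 2 2 (bracket rt_0) (bracket rt_5)"
  by (rule proj_cong_of_coeffs[OF bracket_coeffs_rational(2,13), of 27 38]) (simp_all add: cong_def)

lemma five_equiv_coeffs_cross:
  assumes "five_equiv S T" "bracket_coeffs S p" "bracket_coeffs T q"
  shows "[fst p * snd q = snd p * fst q] (mod 41)"
proof -
  have dims: "dom S = 2" "cod S = 2" "dom rt_0 = 2" "cod rt_0 = 2"
    using assms(2) bracket_coeffs_rational(2) by (simp_all add: bracket_coeffs_def)
  have "proj_cong 41 (dom S) (cod S) (bracket S) (bracket T)"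
    using assms(1) unfolding five_equiv_def
    by (rule proj_cong_bracket_tg_rel) (use bracket_five_move dims in auto)
  then obtain u where u: "\<And>x z. length x = 2 \<Longrightarrow> length z = 2 \<Longrightarrow> [bracket S x z = u * bracket T x z] (mod 41)"
    unfolding proj_cong_def dims by blast
  have fst: "[fst p = u * fst q] (mod 41)"
    using assms(2,3) u[of "[False, False]" "[False, False]"] by (simp add: bracket_coeffs_def cupcap_def)
  have unit: "coprime (-286) (41 :: int)"
    unfolding coprime_iff_invertible_int by (rule exI[of _ 1]) (simp add: cong_def)
  have "[snd p * -286 = (u * snd q) * -286] (mod 41)"
    using assms(2,3) u[of "[False, True]" "[True, False]"] by (simp add: bracket_coeffs_def cupcap_def ac_simps)
  then have snd: "[snd p = u * snd q] (mod 41)"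
    by (simp only: cong_mult_rcancel[OF unit])
  have "[fst p * snd q = (u * fst q) * snd q] (mod 41)"
    using fst by (rule cong_scalar_right)
  also have "(u * fst q) * snd q = (u * snd q) * fst q"
    by simp
  also have "[\<dots> = snd p * fst q] (mod 41)"
    using snd by (rule cong_scalar_right[OF cong_sym])
  finally show ?thesis .
qed

lemma cong_cross_mod:
  "[(a mod m) * (d mod m) = (b mod m) * (c mod m)] (mod m) \<longleftrightarrow> [a * d = b * c] (mod m)"
  for a b c d m :: int
  by (simp add: cong_def mod_mult_eq)

theorem corollary2p7:
  defines "L \<equiv> [rt_inf, rt_0, rt_m1, rt_1, rt_m2, rt_2, rt_2_5, rt_5_2, rt_3_2, rt_m3_2, rt_1_2, rt_m1_2]"
  shows "\<forall>i < length L. \<forall>j < length L. i \<noteq> j \<longrightarrow> \<not> five_equiv (L ! i) (L ! j)"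
proof (intro allI impI notI)
  define C :: "(int \<times> int) list" where "C = [(1, 0), (0, 1), (7, 6), (6, 7),
    sum_coeffs (7, 6) (7, 6), sum_coeffs (6, 7) (6, 7),
    prod_coeffs (prod_coeffs (sum_coeffs (6, 7) (6, 7)) (6, 7)) (6, 7),
    sum_coeffs (prod_coeffs (6, 7) (6, 7)) (sum_coeffs (6, 7) (6, 7)),
    sum_coeffs (prod_coeffs (6, 7) (6, 7)) (6, 7), sum_coeffs (prod_coeffs (7, 6) (7, 6)) (7, 6),
    prod_coeffs (6, 7) (6, 7), prod_coeffs (7, 6) (7, 6)]"
  define P where "P = map (\<lambda>(a, b). (a mod 41, b mod 41)) C"
  have P_eq: "P = [(1, 0), (0, 1), (7, 6), (6, 7), (19, 36), (17, 8), (38, 32), (5, 29), (5, 10),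
      (40, 20), (36, 19), (8, 17)]"
    by (simp add: P_def C_def)
  fix i j
  assume ij: "i < length L" "j < length L" "i \<noteq> j" and "five_equiv (L ! i) (L ! j)"
  moreover have "\<forall>i < length L. bracket_coeffs (L ! i) (C ! i)"
    unfolding L_def C_def using bracket_coeffs_rational by (simp add: All_less_Suc numeral_eq_Suc)
  ultimately have "[fst (C ! i) * snd (C ! j) = snd (C ! i) * fst (C ! j)] (mod 41)"
    using five_equiv_coeffs_cross by blast
  moreover have "length C = length L"
    by (simp add: C_def L_def)
  ultimately have "[fst (P ! i) * snd (P ! j) = snd (P ! i) * fst (P ! j)] (mod 41)"
    using ij by (simp add: P_def case_prod_beta cong_cross_mod)
  moreover have "\<forall>i < length L. \<forall>j < length L. i \<noteq> j \<longrightarrow>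
      [fst (P ! i) * snd (P ! j) \<noteq> snd (P ! i) * fst (P ! j)] (mod 41)"
    unfolding L_def P_eq by (simp add: All_less_Suc numeral_eq_Suc cong_def)
  ultimately show False
    using ij by blast
qed

end
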